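(* Let $P$ be a finite poset. Then $A(S_N(P))=\emptyset$.
   Context: For a poset $P$, $x\prec y$ means $x<y$ with no $z$ satisfying $x<z<y$; $\mathrm{Diag}(P)$ is the set of covering pairs $(x,y)$, and $\mathrm{Inc}(P)$ the set of pairs of incomparable elements. Four elements $a,b,c,d$ form an $N$ in $P$ if $b\prec c$, $a\prec c$, $b\prec d$ and $(a,d)\in\mathrm{Inc}(P)$; $(b,c)$ is the diagonal edge of this $N$. $N_{diag}(P)$ is the set of diagonal edges of all $N$'s in $P$. $S_N(P)$ is the poset obtained from $P$ by adding one new (dummy) vertex $u$ on each edge $(b,c)\in N_{diag}(P)$ (so that $b\prec u\prec c$), with the induced order. For a poset $Q$, $A(Q)$ is the set of pairs $(b,c)\in\mathrm{Diag}(Q)\setminus N_{diag}(Q)$ for which there exist $a,d\in Q$ with $a<c$, $b<d$, $(a,b),(c,d)\in\mathrm{Inc}(Q)$, and either $(a,c)\in N_{diag}(Q)$ or $(b,d)\in N_{diag}(Q)$. *)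

theory Defs
  imports Main
begin

definition poset :: "'a set \<Rightarrow> ('a \<Rightarrow> 'a \<Rightarrow> bool) \<Rightarrow> bool" where
  "poset V le \<longleftrightarrow> (\<forall>x\<in>V. le x x)
     \<and> (\<forall>x\<in>V. \<forall>y\<in>V. le x y \<and> le y x \<longrightarrow> x = y)
     \<and> (\<forall>x\<in>V. \<forall>y\<in>V. \<forall>z\<in>V. le x y \<and> le y z \<longrightarrow> le x z)"

definition pless :: "('a \<Rightarrow> 'a \<Rightarrow> bool) \<Rightarrow> 'a \<Rightarrow> 'a \<Rightarrow> bool" where
  "pless le x y \<longleftrightarrow> le x y \<and> x \<noteq> y"

definition covers :: "'a set \<Rightarrow> ('a \<Rightarrow> 'a \<Rightarrow> bool) \<Rightarrow> 'a \<Rightarrow> 'a \<Rightarrow> bool" where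
  "covers V le x y \<longleftrightarrow> x \<in> V \<and> y \<in> V \<and> pless le x y
     \<and> \<not> (\<exists>z\<in>V. pless le x z \<and> pless le z y)"

definition Diag :: "'a set \<Rightarrow> ('a \<Rightarrow> 'a \<Rightarrow> bool) \<Rightarrow> ('a \<times> 'a) set" where
  "Diag V le = {(x, y). covers V le x y}"

definition Inc :: "'a set \<Rightarrow> ('a \<Rightarrow> 'a \<Rightarrow> bool) \<Rightarrow> ('a \<times> 'a) set" where
  "Inc V le = {(x, y). x \<in> V \<and> y \<in> V \<and> \<not> le x y \<and> \<not> le y x}"

definition is_N :: "'a set \<Rightarrow> ('a \<Rightarrow> 'a \<Rightarrow> bool) \<Rightarrow> 'a \<Rightarrow> 'a \<Rightarrow> 'a \<Rightarrow> 'a \<Rightarrow> bool" where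
  "is_N V le a b c d \<longleftrightarrow> covers V le b c \<and> covers V le a c \<and> covers V le b d
     \<and> (a, d) \<in> Inc V le"

definition Ndiag :: "'a set \<Rightarrow> ('a \<Rightarrow> 'a \<Rightarrow> bool) \<Rightarrow> ('a \<times> 'a) set" where
  "Ndiag V le = {(b, c). \<exists>a d. is_N V le a b c d}"

text \<open>S_N(P): vertices are the old ones (Inl p) and one dummy vertex Inr (b,c) per
  N-diagonal edge (b,c); the order is the one generated by P's order and b < u < c.\<close>
definition SN_carrier :: "'a set \<Rightarrow> ('a \<Rightarrow> 'a \<Rightarrow> bool) \<Rightarrow> ('a + ('a \<times> 'a)) set" where
  "SN_carrier V le = Inl ` V \<union> Inr ` Ndiag V le"

fun SN_le :: "('a \<Rightarrow> 'a \<Rightarrow> bool) \<Rightarrow> ('a + ('a \<times> 'a)) \<Rightarrow> ('a + ('a \<times> 'a)) \<Rightarrow> bool" where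
  "SN_le le (Inl p) (Inl q) = le p q"
| "SN_le le (Inl p) (Inr (b, c)) = le p b"
| "SN_le le (Inr (b, c)) (Inl q) = le c q"
| "SN_le le (Inr (b, c)) (Inr (b', c')) = ((b, c) = (b', c') \<or> le c b')"

definition Aset :: "'a set \<Rightarrow> ('a \<Rightarrow> 'a \<Rightarrow> bool) \<Rightarrow> ('a \<times> 'a) set" where
  "Aset V le = {(b, c). (b, c) \<in> Diag V le - Ndiag V le \<and>
     (\<exists>a\<in>V. \<exists>d\<in>V. pless le a c \<and> pless le b d \<and> (a, b) \<in> Inc V le \<and> (c, d) \<in> Inc V le
        \<and> ((a, c) \<in> Ndiag V le \<or> (b, d) \<in> Ndiag V le))}"

end

theory Submission
  imports Defs
begin

text \<open>In \<open>S\<^sub>N(P)\<close> every N-diagonal joins two original vertices, and a cover between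
  original vertices is exactly a cover of \<open>P\<close> that is not an N-diagonal. Such a cover
  \<open>p \<prec> q\<close> separates: everything below \<open>q\<close> lies below everything above \<open>p\<close>.
  Suppose \<open>b \<prec> c\<close> lies in \<open>A(S\<^sub>N(P))\<close> because \<open>a \<prec> c\<close> is the diagonal of an N
  \<open>a' a c d'\<close>. If \<open>a'\<close> is a dummy vertex, separation by \<open>b \<prec> c\<close> forces \<open>c \<le> d\<close>.
  If \<open>d'\<close> is the dummy vertex of an N-diagonal \<open>a \<prec> y\<close> of \<open>P\<close>, separation by
  \<open>a \<prec> c\<close> and \<open>b \<prec> c\<close> makes \<open>b \<prec> y\<close> an N-diagonal as well, and its dummy vertex
  completes an N with diagonal \<open>b \<prec> c\<close>. Otherwise \<open>a' a c d'\<close> is an N of \<open>P\<close>, whose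
  diagonal would have been subdivided. The case where \<open>b \<prec> d\<close> is an N-diagonal is
  dual, as reversing the order commutes with \<open>S\<^sub>N\<close>.\<close>

definition A_quadruple :: "'a set \<Rightarrow> ('a \<Rightarrow> 'a \<Rightarrow> bool) \<Rightarrow> 'a \<Rightarrow> 'a \<Rightarrow> 'a \<Rightarrow> 'a \<Rightarrow> bool" where
  "A_quadruple V le a b c d \<longleftrightarrow> (b, c) \<in> Diag V le - Ndiag V le \<and> a \<in> V \<and> d \<in> V
     \<and> pless le a c \<and> pless le b d \<and> (a, b) \<in> Inc V le \<and> (c, d) \<in> Inc V le"

lemma Aset_eq_A_quadruple:
  "Aset V le = {(b, c). \<exists>a d. A_quadruple V le a b c d
     \<and> ((a, c) \<in> Ndiag V le \<or> (b, d) \<in> Ndiag V le)}"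
  by (auto simp: Aset_def A_quadruple_def)

lemma poset_refl: "poset V le \<Longrightarrow> x \<in> V \<Longrightarrow> le x x"
  unfolding poset_def by blast

lemma poset_antisym: "poset V le \<Longrightarrow> x \<in> V \<Longrightarrow> y \<in> V \<Longrightarrow> le x y \<Longrightarrow> le y x \<Longrightarrow> x = y"
  unfolding poset_def by blast

lemma poset_trans:
  "poset V le \<Longrightarrow> x \<in> V \<Longrightarrow> y \<in> V \<Longrightarrow> z \<in> V \<Longrightarrow> le x y \<Longrightarrow> le y z \<Longrightarrow> le x z"
  unfolding poset_def by blast

lemma poset_conversep: "poset V le \<Longrightarrow> poset V (conversep le)"
  unfolding poset_def by (intro conjI; metis conversep_iff)

lemma coversD: "covers V le x y \<Longrightarrow> x \<in> V \<and> y \<in> V \<and> le x y \<and> x \<noteq> y"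
  by (simp add: covers_def pless_def)

lemma coversI:
  "x \<in> V \<Longrightarrow> y \<in> V \<Longrightarrow> le x y \<Longrightarrow> x \<noteq> y
    \<Longrightarrow> (\<And>z. z \<in> V \<Longrightarrow> le x z \<Longrightarrow> le z y \<Longrightarrow> z = x \<or> z = y) \<Longrightarrow> covers V le x y"
  unfolding covers_def pless_def by blast

lemma covers_between:
  "covers V le x y \<Longrightarrow> z \<in> V \<Longrightarrow> le x z \<Longrightarrow> le z y \<Longrightarrow> z = x \<or> z = y"
  unfolding covers_def pless_def by blast

lemma covers_Ndiag: "(b, c) \<in> Ndiag V le \<Longrightarrow> covers V le b c"
  by (auto simp: Ndiag_def is_N_def)

lemma Ndiag_I: "is_N V le a b c d \<Longrightarrow> (b, c) \<in> Ndiag V le"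
  unfolding Ndiag_def by blast

locale order_reversing_embedding =
  fixes f :: "'a \<Rightarrow> 'b" and R :: "'a \<Rightarrow> 'a \<Rightarrow> bool" and R' :: "'b \<Rightarrow> 'b \<Rightarrow> bool"
  assumes inj: "inj f" and reverses: "R' (f x) (f y) = R y x"
begin

lemma pless_iff: "pless R' (f x) (f y) \<longleftrightarrow> pless R y x"
  using inj by (auto simp: pless_def reverses inj_eq)

lemma covers_iff: "covers (f ` W) R' (f x) (f y) \<longleftrightarrow> covers W R y x"
  using inj by (auto simp: covers_def pless_iff inj_image_mem_iff)

lemma Inc_iff: "(f x, f y) \<in> Inc (f ` W) R' \<longleftrightarrow> (y, x) \<in> Inc W R"
  using inj by (auto simp: Inc_def reverses inj_image_mem_iff)

lemma is_N_iff: "is_N (f ` W) R' (f a) (f b) (f c) (f d) \<longleftrightarrow> is_N W R d c b a"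
  by (simp add: is_N_def covers_iff Inc_iff conj_ac)

lemma Ndiag_iff: "(f b, f c) \<in> Ndiag (f ` W) R' \<longleftrightarrow> (c, b) \<in> Ndiag W R"
proof
  assume "(f b, f c) \<in> Ndiag (f ` W) R'"
  then obtain a' d' where N: "is_N (f ` W) R' a' (f b) (f c) d'"
    by (auto simp: Ndiag_def)
  then have "a' \<in> f ` W" "d' \<in> f ` W"
    by (auto simp: is_N_def covers_def)
  with N show "(c, b) \<in> Ndiag W R"
    by (auto simp: is_N_iff intro: Ndiag_I)
next
  assume "(c, b) \<in> Ndiag W R"
  then obtain a d where "is_N W R a c b d"
    by (auto simp: Ndiag_def)
  then have "is_N (f ` W) R' (f d) (f b) (f c) (f a)"
    by (simp add: is_N_iff)
  then show "(f b, f c) \<in> Ndiag (f ` W) R'"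
    by (rule Ndiag_I)
qed

lemma Diag_iff: "(f x, f y) \<in> Diag (f ` W) R' \<longleftrightarrow> (y, x) \<in> Diag W R"
  by (simp add: Diag_def covers_iff)

lemma A_quadruple_iff:
  "A_quadruple (f ` W) R' (f d) (f c) (f b) (f a) \<longleftrightarrow> A_quadruple W R a b c d"
  using inj by (auto simp: A_quadruple_def Diag_iff Ndiag_iff pless_iff Inc_iff inj_image_mem_iff)

end

lemma order_reversing_embedding_conversep: "order_reversing_embedding id R (conversep R)"
  by unfold_locales auto

lemma covers_conversep: "covers V (conversep le) x y \<longleftrightarrow> covers V le y x"
  using order_reversing_embedding.covers_iff[OF order_reversing_embedding_conversep] by simp

lemma Ndiag_conversep: "(b, c) \<in> Ndiag V (conversep le) \<longleftrightarrow> (c, b) \<in> Ndiag V le"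
  using order_reversing_embedding.Ndiag_iff[OF order_reversing_embedding_conversep] by simp

lemma ex_cover_above:
  assumes fin: "finite V" and P: "poset V le"
    and x: "x \<in> V" and y: "y \<in> V" and xy: "pless le x y"
  shows "\<exists>z\<in>V. covers V le x z \<and> le z y"
proof -
  let ?S = "{z \<in> V. pless le x z \<and> le z y}"
  let ?down = "\<lambda>z. card {v \<in> V. le v z}"
  have "y \<in> ?S" using y xy poset_refl[OF P y] by simp
  then obtain z where z: "z \<in> ?S" and least: "\<And>w. w \<in> ?S \<Longrightarrow> ?down z \<le> ?down w"
    using ex_has_least_nat[of "\<lambda>z. z \<in> ?S" y ?down] by blast
  have "\<not> (pless le x w \<and> pless le w z)" if w: "w \<in> V" for w
  proof
    assume "pless le x w \<and> pless le w z"
    then have xw: "pless le x w" and wz: "le w z" "w \<noteq> z" by (auto simp: pless_def)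
    have zV: "z \<in> V" using z by simp
    have "w \<in> ?S" using xw poset_trans[OF P w zV y wz(1)] z w by simp
    moreover have "{v \<in> V. le v w} \<subset> {v \<in> V. le v z}"
      using poset_trans[OF P _ w zV _ wz(1)] poset_antisym[OF P w zV wz(1)] wz(2)
        poset_refl[OF P zV] zV by blast
    then have "?down w < ?down z" using fin by (simp add: psubset_card_mono)
    ultimately show False using least by fastforce
  qed
  then show ?thesis using z x unfolding covers_def by blast
qed

lemma ex_cover_below:
  assumes "finite V" and "poset V le"
    and "x \<in> V" and "y \<in> V" and "pless le x y"
  shows "\<exists>z\<in>V. covers V le z y \<and> le x z"
  using ex_cover_above[of V "conversep le" y x] assms
  by (auto simp: poset_conversep covers_conversep pless_def)

text \<open>Otherwise a lower cover of \<open>q\<close> and an upper cover of \<open>p\<close> would form an N with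
  diagonal \<open>p \<prec> q\<close>.\<close>
lemma below_le_above_non_N_cover:
  assumes fin: "finite V" and P: "poset V le"
    and pq: "covers V le p q" and nN: "(p, q) \<notin> Ndiag V le"
    and x: "x \<in> V" and y: "y \<in> V" and xq: "pless le x q" and py: "pless le p y"
  shows "le x y"
proof -
  note pqV = coversD[OF pq]
  obtain x' where x': "x' \<in> V" "covers V le x' q" "le x x'"
    using ex_cover_below[OF fin P x _ xq] pqV by blast
  obtain y' where y': "y' \<in> V" "covers V le p y'" "le y' y"
    using ex_cover_above[OF fin P _ y py] pqV by blast
  have "le x' y'"
  proof (cases "x' = p \<or> y' = q")
    case True
    then show ?thesis using x' y' pqV poset_trans[OF P] by (metis coversD)
  next
    case False
    then have "\<not> is_N V le x' p q y'" using nN Ndiag_I by metis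
    then have "(x', y') \<notin> Inc V le" using pq x' y' by (simp add: is_N_def)
    moreover have "\<not> le y' x'"
    proof
      assume "le y' x'"
      then have "pless le y' q"
        using False x' y' pqV poset_trans[OF P] by (metis coversD pless_def)
      moreover have "pless le p y'" using y' by (simp add: covers_def)
      ultimately show False using pq y'(1) by (auto simp: covers_def)
    qed
    ultimately show ?thesis using x' y' by (auto simp: Inc_def)
  qed
  then show ?thesis using x x' y y' poset_trans[OF P] by metis
qed

lemma Ndiag_of_non_N_sibling:
  assumes fin: "finite V" and P: "poset V le"
    and ac: "covers V le a c" "(a, c) \<notin> Ndiag V le"
    and bc: "covers V le b c" "(b, c) \<notin> Ndiag V le"
    and ab: "(a, b) \<in> Inc V le" and ay: "(a, y) \<in> Ndiag V le"
  shows "(b, y) \<in> Ndiag V le"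
proof -
  note acV = coversD[OF ac(1)] and bcV = coversD[OF bc(1)]
  have ay_cov: "covers V le a y" using ay by (rule covers_Ndiag)
  note ayV = coversD[OF ay_cov]
  have "le b y"
    using below_le_above_non_N_cover[OF fin P ac] bcV ayV by (simp add: pless_def)
  moreover have "b \<noteq> y" using ab ayV by (auto simp: Inc_def)
  ultimately obtain f where f: "f \<in> V" "covers V le b f" "le f y"
    using ex_cover_above[OF fin P, of b y] bcV ayV by (auto simp: pless_def)
  have "le a f"
    using below_le_above_non_N_cover[OF fin P bc] acV coversD[OF f(2)] by (simp add: pless_def)
  then have "f = y"
    using covers_between[OF ay_cov f(1) _ f(3)] coversD[OF f(2)] ab by (auto simp: Inc_def)
  with f have by_cov: "covers V le b y" by simp
  show ?thesis
  proof (rule ccontr)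
    assume by_nN: "(b, y) \<notin> Ndiag V le"
    obtain w z where "is_N V le w a y z" using ay by (auto simp: Ndiag_def)
    then have wy: "covers V le w y" and az: "covers V le a z" and wz: "(w, z) \<in> Inc V le"
      by (auto simp: is_N_def)
    note wyV = coversD[OF wy] and azV = coversD[OF az]
    have "le w c"
      using below_le_above_non_N_cover[OF fin P by_cov by_nN] wyV bcV by (simp add: pless_def)
    moreover have "w \<noteq> c"
      using covers_between[OF by_cov, of c] bcV wyV by auto
    ultimately have "le w z"
      using below_le_above_non_N_cover[OF fin P ac] wyV azV by (simp add: pless_def)
    then show False using wz by (simp add: Inc_def)
  qed
qed

lemma SN_carrier_cases:
  assumes "u \<in> SN_carrier V le"
  obtains p where "u = Inl p" "p \<in> V"
  | b c where "u = Inr (b, c)" "(b, c) \<in> Ndiag V le"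
  using assms unfolding SN_carrier_def by auto

lemma NdiagD: "(b, c) \<in> Ndiag V le \<Longrightarrow> b \<in> V \<and> c \<in> V \<and> le b c \<and> b \<noteq> c"
  using covers_Ndiag coversD by metis

lemma SN_poset:
  assumes P: "poset V le"
  shows "poset (SN_carrier V le) (SN_le le)"
proof -
  note refl = poset_refl[OF P] and antisym = poset_antisym[OF P] and trans = poset_trans[OF P]
  show ?thesis
    unfolding poset_def
    by (intro conjI ballI impI; elim SN_carrier_cases conjE;
        auto dest!: NdiagD intro: refl; metis antisym trans)
qed

lemma SN_finite: "finite V \<Longrightarrow> finite (SN_carrier V le)"
proof -
  assume "finite V"
  moreover have "Ndiag V le \<subseteq> V \<times> V" using NdiagD by fastforce
  ultimately show ?thesis
    unfolding SN_carrier_def by (simp add: finite_subset)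
qed

lemma SN_le_above_dummy: "SN_le le (Inr (x, y)) w \<Longrightarrow> w \<noteq> Inr (x, y) \<Longrightarrow> SN_le le (Inl y) w"
  by (cases w) auto

lemma covers_SN_from_dummy:
  assumes P: "poset V le" and cov: "covers (SN_carrier V le) (SN_le le) (Inr (x, y)) u"
  shows "u = Inl y"
proof -
  note covV = coversD[OF cov]
  have "(x, y) \<in> Ndiag V le" using covV by (auto simp: SN_carrier_def)
  then have "Inl y \<in> SN_carrier V le" "SN_le le (Inr (x, y)) (Inl y)"
    using NdiagD[of x y] poset_refl[OF P] by (auto simp: SN_carrier_def)
  moreover have "SN_le le (Inl y) u" using covV by (intro SN_le_above_dummy) auto
  ultimately show ?thesis using covers_between[OF cov] by blast
qed

lemma covers_SN_Inl_Inl: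
  assumes P: "poset V le"
  shows "covers (SN_carrier V le) (SN_le le) (Inl p) (Inl q) \<longleftrightarrow> (p, q) \<in> Diag V le - Ndiag V le"
proof
  assume cov: "covers (SN_carrier V le) (SN_le le) (Inl p) (Inl q)"
  then have pq: "p \<in> V" "q \<in> V" "le p q" "p \<noteq> q"
    using coversD[OF cov] by (auto simp: SN_carrier_def)
  have "covers V le p q"
  proof (rule coversI[where le = le, OF pq])
    fix z assume "z \<in> V" "le p z" "le z q"
    then show "z = p \<or> z = q"
      using covers_between[OF cov, of "Inl z"] by (simp add: SN_carrier_def)
  qed
  moreover have "(p, q) \<notin> Ndiag V le"
  proof
    assume "(p, q) \<in> Ndiag V le"
    then show False
      using covers_between[OF cov, of "Inr (p, q)"] pq poset_refl[OF P] by (simp add: SN_carrier_def)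
  qed
  ultimately show "(p, q) \<in> Diag V le - Ndiag V le" by (simp add: Diag_def)
next
  assume "(p, q) \<in> Diag V le - Ndiag V le"
  then have cov: "covers V le p q" and nN: "(p, q) \<notin> Ndiag V le" by (auto simp: Diag_def)
  note pq = coversD[OF cov]
  show "covers (SN_carrier V le) (SN_le le) (Inl p) (Inl q)"
  proof (rule coversI)
    show "Inl p \<in> SN_carrier V le" "Inl q \<in> SN_carrier V le"
      using pq by (auto simp: SN_carrier_def)
    show "SN_le le (Inl p) (Inl q)" "Inl p \<noteq> Inl q" using pq by auto
    fix u assume u: "u \<in> SN_carrier V le" "SN_le le (Inl p) u" "SN_le le u (Inl q)"
    from u(1) show "u = Inl p \<or> u = Inl q"
    proof (cases rule: SN_carrier_cases)
      case (1 r)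
      then show ?thesis using covers_between[OF cov, of r] u by auto
    next
      case (2 b c)
      note bc = NdiagD[OF 2(2)]
      have "le p b" "le c q" using u 2 by auto
      then have "b = p \<or> b = q" "c = p \<or> c = q"
        using covers_between[OF cov] bc pq poset_trans[OF P] by metis+
      then have "(b, c) = (p, q)"
        using bc \<open>le p b\<close> \<open>le c q\<close> poset_antisym[OF P] by metis
      then show ?thesis using nN 2 by simp
    qed
  qed
qed

lemma covers_SN_Inl_dummy:
  assumes P: "poset V le" and xy: "(x, y) \<in> Ndiag V le"
  shows "covers (SN_carrier V le) (SN_le le) (Inl x) (Inr (x, y))"
proof (rule coversI)
  note xyV = NdiagD[OF xy]
  show "Inl x \<in> SN_carrier V le" "Inr (x, y) \<in> SN_carrier V le"
    using xy xyV by (auto simp: SN_carrier_def)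
  show "SN_le le (Inl x) (Inr (x, y))" "Inl x \<noteq> Inr (x, y)" using xyV poset_refl[OF P] by simp_all
  fix u assume u: "u \<in> SN_carrier V le" "SN_le le (Inl x) u" "SN_le le u (Inr (x, y))"
  from u(1) show "u = Inl x \<or> u = Inr (x, y)"
  proof (cases rule: SN_carrier_cases)
    case (1 r)
    then show ?thesis using u poset_antisym[OF P, of x r] xyV by auto
  next
    case (2 b c)
    note bcV = NdiagD[OF 2(2)]
    show ?thesis
    proof (rule ccontr)
      assume "\<not> ?thesis"
      then have "le x b" "le c x" using u 2 by auto
      then show False using poset_trans[OF P, of c x b] poset_antisym[OF P, of b c] bcV xyV by blast
    qed
  qed
qed

definition SN_dual :: "'a + 'a \<times> 'a \<Rightarrow> 'a + 'a \<times> 'a" where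
  "SN_dual = map_sum id prod.swap"

lemma SN_dual_involution: "SN_dual (SN_dual u) = u"
  by (cases u) (auto simp: SN_dual_def)

lemma SN_dual_simps [simp]: "SN_dual (Inl p) = Inl p" "SN_dual (Inr (x, y)) = Inr (y, x)"
  by (simp_all add: SN_dual_def)

lemma order_reversing_embedding_SN_dual:
  "order_reversing_embedding SN_dual (SN_le le) (SN_le (conversep le))"
proof
  show "inj SN_dual"
    by (metis injI SN_dual_involution)
  show "SN_le (conversep le) (SN_dual u) (SN_dual v) = SN_le le v u" for u v
    by (cases u; cases v) (auto simp: SN_dual_def)
qed

lemma SN_dual_carrier: "SN_dual ` SN_carrier V le = SN_carrier V (conversep le)"
proof -
  have "Ndiag V (conversep le) = prod.swap ` Ndiag V le"
    using Ndiag_conversep by fastforce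
  then show ?thesis
    by (simp add: SN_dual_def SN_carrier_def image_Un image_image)
qed

lemma covers_SN_to_dummy:
  assumes P: "poset V le" and cov: "covers (SN_carrier V le) (SN_le le) u (Inr (x, y))"
  shows "u = Inl x"
proof -
  interpret order_reversing_embedding SN_dual "SN_le le" "SN_le (conversep le)"
    by (rule order_reversing_embedding_SN_dual)
  have "covers (SN_dual ` SN_carrier V le) (SN_le (conversep le)) (SN_dual (Inr (x, y))) (SN_dual u)"
    using cov by (simp only: covers_iff)
  then have "covers (SN_carrier V (conversep le)) (SN_le (conversep le)) (Inr (y, x)) (SN_dual u)"
    by (simp add: SN_dual_carrier)
  then have "SN_dual u = Inl x"
    by (rule covers_SN_from_dummy[OF poset_conversep[OF P]])
  then show ?thesis by (metis SN_dual_involution SN_dual_simps(1))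
qed

lemma Ndiag_SN_Inl:
  assumes P: "poset V le" and bc: "(b, c) \<in> Ndiag (SN_carrier V le) (SN_le le)"
  obtains b0 c0 where "b = Inl b0" "c = Inl c0"
proof -
  obtain a d where N: "is_N (SN_carrier V le) (SN_le le) a b c d"
    using bc by (auto simp: Ndiag_def)
  then have ac: "covers (SN_carrier V le) (SN_le le) a c"
    and bc: "covers (SN_carrier V le) (SN_le le) b c"
    and bd: "covers (SN_carrier V le) (SN_le le) b d"
    and ad: "(a, d) \<in> Inc (SN_carrier V le) (SN_le le)"
    by (auto simp: is_N_def)
  \<comment> \<open>a dummy vertex has a single upper and a single lower cover\<close>
  have "b \<notin> range Inr"
  proof
    assume "b \<in> range Inr"
    then obtain x y where "b = Inr (x, y)" by auto
    then have "c = d" using covers_SN_from_dummy[OF P] bc bd by metis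
    then show False using ad coversD[OF ac] by (auto simp: Inc_def)
  qed
  moreover have "c \<notin> range Inr"
  proof
    assume "c \<in> range Inr"
    then obtain x y where "c = Inr (x, y)" by auto
    then have "a = b" using covers_SN_to_dummy[OF P] ac bc by metis
    then show False using ad coversD[OF bd] by (auto simp: Inc_def)
  qed
  ultimately show ?thesis using that by (metis rangeI sum.exhaust)
qed

lemma not_is_N_SN_Inl:
  assumes P: "poset V le"
  shows "\<not> is_N (SN_carrier V le) (SN_le le) (Inl a) (Inl b) (Inl c) (Inl d)"
proof
  assume N: "is_N (SN_carrier V le) (SN_le le) (Inl a) (Inl b) (Inl c) (Inl d)"
  then have "is_N V le a b c d"
    by (simp add: is_N_def covers_SN_Inl_Inl[OF P] Diag_def Inc_def) (auto simp: SN_carrier_def)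
  moreover have "(b, c) \<notin> Ndiag V le"
    using N by (simp add: is_N_def covers_SN_Inl_Inl[OF P])
  ultimately show False using Ndiag_I by metis
qed

lemma is_N_SN_dummy_over_sibling:
  assumes fin: "finite V" and P: "poset V le"
    and ac: "(a, c) \<in> Diag V le - Ndiag V le" and bc: "(b, c) \<in> Diag V le - Ndiag V le"
    and ab: "(a, b) \<in> Inc V le" and ay: "(a, y) \<in> Ndiag V le"
  shows "is_N (SN_carrier V le) (SN_le le) (Inl a) (Inl b) (Inl c) (Inr (b, y))"
proof -
  have b_y: "(b, y) \<in> Ndiag V le"
    using Ndiag_of_non_N_sibling[OF fin P _ _ _ _ ab ay] ac bc by (auto simp: Diag_def)
  have "\<not> le y a" using NdiagD[OF ay] poset_antisym[OF P] by blast
  then have "(Inl a, Inr (b, y)) \<in> Inc (SN_carrier V le) (SN_le le)"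
    using ab b_y by (auto simp: Inc_def SN_carrier_def)
  then show ?thesis
    using ac bc covers_SN_Inl_Inl[OF P] covers_SN_Inl_dummy[OF P b_y] by (simp add: is_N_def)
qed

lemma A_quadruple_SN_not_Ndiag:
  assumes fin: "finite V" and P: "poset V le"
    and A: "A_quadruple (SN_carrier V le) (SN_le le) a b c d"
  shows "(a, c) \<notin> Ndiag (SN_carrier V le) (SN_le le)"
proof
  let ?Q = "SN_carrier V le" and ?R = "SN_le le"
  have QP: "poset ?Q ?R" and finQ: "finite ?Q" using SN_poset[OF P] SN_finite[OF fin] .
  from A have bc: "covers ?Q ?R b c" and bc_nN: "(b, c) \<notin> Ndiag ?Q ?R" and dQ: "d \<in> ?Q"
    and bd: "pless ?R b d" and ab: "(a, b) \<in> Inc ?Q ?R" and cd: "(c, d) \<in> Inc ?Q ?R"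
    by (auto simp: A_quadruple_def Diag_def)
  assume ac: "(a, c) \<in> Ndiag ?Q ?R"
  then obtain a' d' where N: "is_N ?Q ?R a' a c d'" by (auto simp: Ndiag_def)
  then have a'c: "covers ?Q ?R a' c" and ac_cov: "covers ?Q ?R a c" and ad': "covers ?Q ?R a d'"
    by (auto simp: is_N_def)
  obtain a0 c0 where a: "a = Inl a0" and c: "c = Inl c0" using Ndiag_SN_Inl[OF P ac] .
  obtain b0 where b: "b = Inl b0"
  proof (cases b)
    case (Inr e)
    then obtain x y where "b = Inr (x, y)" by (cases e) auto
    then have "c = Inl y" using covers_SN_from_dummy[OF P] bc by simp
    moreover have "?R (Inl y) d"
      using bd \<open>b = Inr (x, y)\<close> by (intro SN_le_above_dummy) (auto simp: pless_def)
    ultimately show ?thesis using cd by (simp add: Inc_def)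
  qed
  have a0c0: "(a0, c0) \<in> Diag V le - Ndiag V le" and b0c0: "(b0, c0) \<in> Diag V le - Ndiag V le"
    using ac_cov bc a b c covers_SN_Inl_Inl[OF P] by simp_all
  have "a' \<in> ?Q" "d' \<in> ?Q" using coversD[OF a'c] coversD[OF ad'] by simp_all
  then consider (dummy_a') x y where "a' = Inr (x, y)" | (dummy_d') x y where "d' = Inr (x, y)"
    | (no_dummy) x y where "a' = Inl x" "d' = Inl y"
    by (metis SN_carrier_cases)
  then show False
  proof cases
    case (dummy_a' x y)
    \<comment> \<open>\<open>b \<prec> c\<close> separates \<open>a'\<close> from \<open>d\<close>, and all that lies above the dummy \<open>a'\<close> lies above \<open>c\<close>\<close>
    have "?R a' d"
      using below_le_above_non_N_cover[OF finQ QP bc bc_nN] coversD[OF a'c] dQ bd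
      by (simp add: pless_def)
    moreover have "a' \<noteq> d" using bc bd a'c by (auto simp: covers_def)
    moreover have "c = Inl y" using covers_SN_from_dummy[OF P] a'c dummy_a' by simp
    ultimately have "?R c d" using SN_le_above_dummy dummy_a' by metis
    then show False using cd by (simp add: Inc_def)
  next
    case (dummy_d' x y)
    have "a = Inl x" using covers_SN_to_dummy[OF P] ad' dummy_d' by simp
    then have "(a0, y) \<in> Ndiag V le"
      using coversD[OF ad'] dummy_d' a by (auto simp: SN_carrier_def)
    moreover have "(a0, b0) \<in> Inc V le" using ab a b by (auto simp: Inc_def SN_carrier_def)
    ultimately have "is_N ?Q ?R a b c (Inr (b0, y))"
      using is_N_SN_dummy_over_sibling[OF fin P a0c0 b0c0] a b c by simp
    then show False using bc_nN Ndiag_I by metis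
  next
    case (no_dummy x y)
    then show False using N a c not_is_N_SN_Inl[OF P] by simp
  qed
qed

theorem lemma4:
  fixes V :: "'a set" and le :: "'a \<Rightarrow> 'a \<Rightarrow> bool"
  assumes "finite V" and "poset V le"
  shows "Aset (SN_carrier V le) (SN_le le) = {}"
proof -
  let ?Q = "SN_carrier V le" and ?R = "SN_le le"
  interpret order_reversing_embedding SN_dual ?R "SN_le (conversep le)"
    by (rule order_reversing_embedding_SN_dual)
  have "(b, d) \<notin> Ndiag ?Q ?R" if A: "A_quadruple ?Q ?R a b c d" for a b c d
  proof -
    have "A_quadruple (SN_carrier V (conversep le)) (SN_le (conversep le))
        (SN_dual d) (SN_dual c) (SN_dual b) (SN_dual a)"
      using A A_quadruple_iff SN_dual_carrier by metis
    then have "(SN_dual d, SN_dual b) \<notin> Ndiag (SN_carrier V (conversep le)) (SN_le (conversep le))"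
      using A_quadruple_SN_not_Ndiag assms poset_conversep by blast
    then show ?thesis using Ndiag_iff SN_dual_carrier by metis
  qed
  then show ?thesis
    using A_quadruple_SN_not_Ndiag[OF assms] by (auto simp: Aset_eq_A_quadruple)
qed

end
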